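(* Let $\varphi_0\in\mathbb{R}$ and let $v$ be a smooth function with $v(\varphi)>0$ and $v'(\varphi)>0$ for all $\varphi\ge\varphi_0$. Let $h_1,h_2$ be two solutions of $h'=\sqrt{h^2-v}$ in the region $\{(\varphi,h):\varphi\ge\varphi_0,\ h>\sqrt{v(\varphi)}\}$ with $h_2(\varphi_0)>h_1(\varphi_0)$, and set $\mathfrak{h}_i(\varphi)=h_i(\varphi)/\sqrt{v(\varphi)}$, $i=1,2$. Then, for all $\varphi$ at which both are defined, $$\mathfrak{h}_2(\varphi)>\mathfrak{h}_1(\varphi)\quad(\varphi\ge\varphi_0),$$ and $$\frac{\mathfrak{h}_2(\varphi)}{\mathfrak{h}_1(\varphi)}>\frac{\mathfrak{h}_2(\varphi')}{\mathfrak{h}_1(\varphi')}\quad\text{for all }\varphi>\varphi'>\varphi_0.$$ *)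

theory Defs
  imports "HOL-Analysis.Analysis"
begin

definition smooth_on :: "real set \<Rightarrow> (real \<Rightarrow> real) \<Rightarrow> bool" where
  "smooth_on U f \<longleftrightarrow> (\<forall>n. \<forall>x\<in>U. ((deriv ^^ n) f) differentiable (at x))"

end

theory Submission
  imports Defs
begin

text \<open>Normalising by \<open>sqrt v\<close> does not change the quotient of two solutions, so both claims
  are statements about \<open>h\<^sub>2 / h\<^sub>1\<close>. Its derivative has the sign of
  \<open>h\<^sub>1 sqrt (h\<^sub>2\<^sup>2 - v) - h\<^sub>2 sqrt (h\<^sub>1\<^sup>2 - v)\<close>, which is positive as long as
  \<open>h\<^sub>1 < h\<^sub>2\<close>, because \<open>t \<mapsto> sqrt (t\<^sup>2 - v) / t = sqrt (1 - v / t\<^sup>2)\<close> is strictly increasing.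
  Hence the quotient increases for as long as it exceeds 1; since it exceeds 1 initially, a
  first point where \<open>h\<^sub>2 \<le> h\<^sub>1\<close> cannot exist, and the quotient increases everywhere.\<close>

lemma sqrt_square_diff_cross_less:
  fixes a b w :: real
  assumes "0 < w" and "sqrt w < a" and "a < b"
  shows "b * sqrt (a\<^sup>2 - w) < sqrt (b\<^sup>2 - w) * a"
proof -
  have "0 < a" using assms(2) real_sqrt_ge_zero[of w] \<open>0 < w\<close> by linarith
  have "sqrt w < sqrt (a\<^sup>2)" using \<open>0 < a\<close> assms(2) by simp
  then have "w < a\<^sup>2" by (simp only: real_sqrt_less_iff)
  have "a\<^sup>2 < b\<^sup>2" using \<open>0 < a\<close> \<open>a < b\<close> by (simp add: power_strict_mono)
  then have "b\<^sup>2 * (a\<^sup>2 - w) < (b\<^sup>2 - w) * a\<^sup>2"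
    using \<open>0 < w\<close> by (simp add: algebra_simps)
  then have "sqrt (b\<^sup>2 * (a\<^sup>2 - w)) < sqrt ((b\<^sup>2 - w) * a\<^sup>2)"
    by simp
  then show ?thesis
    using \<open>0 < a\<close> \<open>a < b\<close> by (simp add: real_sqrt_mult)
qed

lemma continuous_on_pos_persists:
  fixes g :: "real \<Rightarrow> real"
  assumes "a \<le> b" and cont: "continuous_on {a..b} g" and "0 < g a"
    and step: "\<And>c. a < c \<Longrightarrow> c \<le> b \<Longrightarrow> (\<forall>y\<in>{a..<c}. 0 < g y) \<Longrightarrow> 0 < g c"
  shows "0 < g b"
proof (rule ccontr)
  assume "\<not> 0 < g b"
  define Z where "Z = {y \<in> {a..b}. g y \<le> 0}"
  have "b \<in> Z" using \<open>a \<le> b\<close> \<open>\<not> 0 < g b\<close> by (simp add: Z_def)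
  have "closed Z"
    unfolding Z_def by (rule continuous_on_closed_Collect_le) (simp_all add: cont)
  have "bdd_below Z" unfolding Z_def by (rule bdd_belowI[of _ a]) simp
  define c where "c = Inf Z"
  have "c \<in> Z"
    unfolding c_def using \<open>b \<in> Z\<close> \<open>bdd_below Z\<close> \<open>closed Z\<close> closed_contains_Inf by blast
  then have "a < c" "c \<le> b" "g c \<le> 0"
    using \<open>0 < g a\<close> by (auto simp: Z_def order_le_less)
  moreover have "\<forall>y\<in>{a..<c}. 0 < g y"
  proof
    fix y assume "y \<in> {a..<c}"
    then have "y \<notin> Z" using cInf_lower[OF _ \<open>bdd_below Z\<close>] by (force simp: c_def)
    then show "0 < g y" using \<open>y \<in> {a..<c}\<close> \<open>c \<le> b\<close> by (auto simp: Z_def)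
  qed
  ultimately show False using step by force
qed

lemma quotient_less_if_cross_derivative_less:
  fixes f g f' g' :: "real \<Rightarrow> real"
  assumes "is_interval I" and "r \<in> I" and "s \<in> I" and "r < s"
    and pos: "\<And>x. x \<in> I \<Longrightarrow> 0 < f x"
    and f: "\<And>x. x \<in> I \<Longrightarrow> (f has_real_derivative f' x) (at x within I)"
    and g: "\<And>x. x \<in> I \<Longrightarrow> (g has_real_derivative g' x) (at x within I)"
    and cross: "\<And>x. r < x \<Longrightarrow> x < s \<Longrightarrow> g x * f' x < g' x * f x"
  shows "g r / f r < g s / f s"
proof -
  have quotient: "((\<lambda>x. g x / f x) has_real_derivative
      (g' x * f x - g x * f' x) / (f x * f x)) (at x within I)" if "x \<in> I" for x
    using DERIV_divide[OF g[OF that] f[OF that]] pos[OF that] by simp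
  have "{r..s} \<subseteq> I"
    using mem_is_interval_1_I[OF assms(1-3)] by auto
  show ?thesis
  proof (rule DERIV_pos_imp_increasing_open[OF \<open>r < s\<close>])
    fix x assume "r < x" "x < s"
    then have "x \<in> interior I"
      using interior_mono[OF \<open>{r..s} \<subseteq> I\<close>] by fastforce
    then have "x \<in> I" using interior_subset by blast
    have "0 < (g' x * f x - g x * f' x) / (f x * f x)"
      using cross[OF \<open>r < x\<close> \<open>x < s\<close>] pos[OF \<open>x \<in> I\<close>] by simp
    with quotient[OF \<open>x \<in> I\<close>, unfolded at_within_interior[OF \<open>x \<in> interior I\<close>]]
    show "\<exists>y. ((\<lambda>x. g x / f x) has_real_derivative y) (at x) \<and> 0 < y"
      by blast
  next
    show "continuous_on {r..s} (\<lambda>x. g x / f x)"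
      using DERIV_continuous_on[OF quotient] \<open>{r..s} \<subseteq> I\<close> by (rule continuous_on_subset)
  qed
qed

lemma quotient_strict_mono_on_if_cross_derivative_less:
  fixes f g f' g' :: "real \<Rightarrow> real"
  assumes I: "is_interval I" and "a \<in> I" and "I \<subseteq> {a..}"
    and pos: "\<And>x. x \<in> I \<Longrightarrow> 0 < f x"
    and f: "\<And>x. x \<in> I \<Longrightarrow> (f has_real_derivative f' x) (at x within I)"
    and g: "\<And>x. x \<in> I \<Longrightarrow> (g has_real_derivative g' x) (at x within I)"
    and cross: "\<And>x. x \<in> I \<Longrightarrow> f x < g x \<Longrightarrow> g x * f' x < g' x * f x"
    and "f a < g a"
  shows "\<forall>x\<in>I. f x < g x" and "strict_mono_on I (\<lambda>x. g x / f x)"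
proof -
  have quotient_less: "g r / f r < g s / f s"
    if "r \<in> I" "s \<in> I" "r < s"
      and between: "\<And>y. y \<in> I \<Longrightarrow> r < y \<Longrightarrow> y < s \<Longrightarrow> f y < g y"
    for r s
  proof (rule quotient_less_if_cross_derivative_less[OF I that(1-3) pos f g])
    fix y assume "r < y" "y < s"
    then have "y \<in> I" by (intro mem_is_interval_1_I[OF I that(1,2)]) simp_all
    then show "g y * f' y < g' y * f y"
      using cross between[OF _ \<open>r < y\<close> \<open>y < s\<close>] by blast
  qed
  show "\<forall>x\<in>I. f x < g x"
  proof
    fix x assume "x \<in> I"
    have "{a..x} \<subseteq> I" using mem_is_interval_1_I[OF I \<open>a \<in> I\<close> \<open>x \<in> I\<close>] by auto
    have "0 < g x - f x"
    proof (rule continuous_on_pos_persists[where g = "\<lambda>y. g y - f y"])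
      show "a \<le> x" "0 < g a - f a" using \<open>x \<in> I\<close> \<open>I \<subseteq> {a..}\<close> \<open>f a < g a\<close> by auto
      show "continuous_on {a..x} (\<lambda>y. g y - f y)"
        using DERIV_continuous_on[OF f] DERIV_continuous_on[OF g] \<open>{a..x} \<subseteq> I\<close>
        by (intro continuous_on_diff) (auto intro: continuous_on_subset)
      fix c assume "a < c" "c \<le> x" and positive: "\<forall>y\<in>{a..<c}. 0 < g y - f y"
      then have "c \<in> I" using \<open>{a..x} \<subseteq> I\<close> by auto
      have "g a / f a < g c / f c"
        using quotient_less[OF \<open>a \<in> I\<close> \<open>c \<in> I\<close> \<open>a < c\<close>] positive by simp
      moreover have "1 < g a / f a" using \<open>f a < g a\<close> pos[OF \<open>a \<in> I\<close>] by simp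
      ultimately have "1 < g c / f c" by linarith
      then show "0 < g c - f c" using pos[OF \<open>c \<in> I\<close>] by (simp add: less_divide_eq)
    qed
    then show "f x < g x" by simp
  qed
  then show "strict_mono_on I (\<lambda>x. g x / f x)"
    by (intro strict_mono_onI quotient_less) blast+
qed

theorem proposition4:
  fixes v h1 h2 :: "real \<Rightarrow> real" and \<phi>0 :: real and U I1 I2 :: "real set"
  assumes "open U" and "{\<phi>0..} \<subseteq> U" and "smooth_on U v"
    and "\<And>\<phi>. \<phi> \<ge> \<phi>0 \<Longrightarrow> v \<phi> > 0"
    and "\<And>\<phi>. \<phi> \<ge> \<phi>0 \<Longrightarrow> deriv v \<phi> > 0"
    and "is_interval I1" and "\<phi>0 \<in> I1" and "I1 \<subseteq> {\<phi>0..}"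
    and "is_interval I2" and "\<phi>0 \<in> I2" and "I2 \<subseteq> {\<phi>0..}"
    and "\<And>\<phi>. \<phi> \<in> I1 \<Longrightarrow> h1 \<phi> > sqrt (v \<phi>) \<and>
            (h1 has_real_derivative sqrt ((h1 \<phi>)\<^sup>2 - v \<phi>)) (at \<phi> within I1)"
    and "\<And>\<phi>. \<phi> \<in> I2 \<Longrightarrow> h2 \<phi> > sqrt (v \<phi>) \<and>
            (h2 has_real_derivative sqrt ((h2 \<phi>)\<^sup>2 - v \<phi>)) (at \<phi> within I2)"
    and "h2 \<phi>0 > h1 \<phi>0"
  shows "(\<forall>\<phi> \<in> I1 \<inter> I2. h2 \<phi> / sqrt (v \<phi>) > h1 \<phi> / sqrt (v \<phi>))
       \<and> (\<forall>\<phi> \<in> I1 \<inter> I2. \<forall>\<phi>' \<in> I1 \<inter> I2. \<phi> > \<phi>' \<and> \<phi>' > \<phi>0 \<longrightarrow>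
            (h2 \<phi> / sqrt (v \<phi>)) / (h1 \<phi> / sqrt (v \<phi>))
              > (h2 \<phi>' / sqrt (v \<phi>')) / (h1 \<phi>' / sqrt (v \<phi>')))"
proof -
  let ?I = "I1 \<inter> I2"
  have v: "0 < v \<phi>" if "\<phi> \<in> ?I" for \<phi> using assms(4,8) that by auto
  have h1: "sqrt (v \<phi>) < h1 \<phi>"
    "(h1 has_real_derivative sqrt ((h1 \<phi>)\<^sup>2 - v \<phi>)) (at \<phi> within ?I)" if "\<phi> \<in> ?I" for \<phi>
    using assms(12) that has_field_derivative_subset[of h1 _ _ I1 ?I] by auto
  have h2: "(h2 has_real_derivative sqrt ((h2 \<phi>)\<^sup>2 - v \<phi>)) (at \<phi> within ?I)"
    if "\<phi> \<in> ?I" for \<phi>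
    using assms(13) that has_field_derivative_subset[of h2 _ _ I2 ?I] by auto
  have h1_pos: "0 < h1 \<phi>" if "\<phi> \<in> ?I" for \<phi>
    using h1(1)[OF that] real_sqrt_ge_zero[of "v \<phi>"] v[OF that] by linarith
  note comparison = quotient_strict_mono_on_if_cross_derivative_less
    [OF is_interval_Int[OF assms(6,9)] _ _ h1_pos h1(2) h2 _ assms(14)]
  have less: "\<forall>\<phi>\<in>?I. h1 \<phi> < h2 \<phi>" and mono: "strict_mono_on ?I (\<lambda>\<phi>. h2 \<phi> / h1 \<phi>)"
    using comparison assms(7,8,10) sqrt_square_diff_cross_less v h1(1) by auto
  have normalise: "(h2 \<phi> / sqrt (v \<phi>)) / (h1 \<phi> / sqrt (v \<phi>)) = h2 \<phi> / h1 \<phi>"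
    if "\<phi> \<in> ?I" for \<phi> using v[OF that] by simp
  show ?thesis
  proof (intro conjI ballI impI)
    fix \<phi> assume "\<phi> \<in> ?I"
    then have "h1 \<phi> < h2 \<phi>" and "0 < sqrt (v \<phi>)" using less v by auto
    then show "h1 \<phi> / sqrt (v \<phi>) < h2 \<phi> / sqrt (v \<phi>)"
      by (rule divide_strict_right_mono)
  next
    fix \<phi> \<phi>' assume "\<phi> \<in> ?I" "\<phi>' \<in> ?I" "\<phi> > \<phi>' \<and> \<phi>' > \<phi>0"
    then have "h2 \<phi>' / h1 \<phi>' < h2 \<phi> / h1 \<phi>"
      using strict_mono_onD[OF mono] by blast
    then show "(h2 \<phi> / sqrt (v \<phi>)) / (h1 \<phi> / sqrt (v \<phi>))
        > (h2 \<phi>' / sqrt (v \<phi>')) / (h1 \<phi>' / sqrt (v \<phi>'))"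
      unfolding normalise[OF \<open>\<phi> \<in> ?I\<close>] normalise[OF \<open>\<phi>' \<in> ?I\<close>] .
  qed
qed

end
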